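(* Let $\mathcal{A}$ be a unital $\mathbb{F}$-algebra with $\dim\mathcal{A}=n>4$, let $S$ be a generating set of $\mathcal{A}$, and let $(m_0,m_1,\ldots,m_{n-1})$ be the characteristic sequence of $S$. Then $m_{h+1}\le 2m_h$ for all $h$ with $2\le h\le n-2$.
   Context: Algebras are finite-dimensional, unital, not necessarily associative, over a field $\mathbb{F}$. For a finite generating set $S$ of $\mathcal{A}$, a word in $S$ is any product (with any bracketing) of finitely many elements of $S$; its length is the number of factors, and $1$ is a word of length $0$. $L_i(S)$ is the linear span of all words in $S$ of length at most $i$ (so $L_0(S)=\mathbb{F}$). The characteristic sequence of $S$ is the non-decreasing sequence $(m_0,\ldots,m_{n-1})$ constructed as follows: $m_0=0$; with $s_1=\dim L_1(S)-1$, set $m_1=\cdots=m_{s_1}=1$; inductively, if $m_1,\ldots,m_r$ are defined using $L_1(S),\ldots,L_{k-1}(S)$, put $s_k=\dim L_k(S)-\dim L_{k-1}(S)$ and set $m_{r+1}=\cdots=m_{r+s_k}=k$. (The sequence has $n=\dim\mathcal{A}$ terms.) *)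

theory Defs
  imports Main "HOL.Vector_Spaces"
begin

definition unital_algebra ::
  "('f::field \<Rightarrow> 'a::ab_group_add \<Rightarrow> 'a) \<Rightarrow> ('a \<Rightarrow> 'a \<Rightarrow> 'a) \<Rightarrow> 'a \<Rightarrow> bool" where
  "unital_algebra scale mult one \<longleftrightarrow>
     vector_space scale \<and>
     (\<forall>x y z. mult (x + y) z = mult x z + mult y z) \<and>
     (\<forall>x y z. mult x (y + z) = mult x y + mult x z) \<and>
     (\<forall>c x y. mult (scale c x) y = scale c (mult x y)) \<and>
     (\<forall>c x y. mult x (scale c y) = scale c (mult x y)) \<and>
     (\<forall>x. mult one x = x \<and> mult x one = x)"

inductive is_word :: "('a \<Rightarrow> 'a \<Rightarrow> 'a) \<Rightarrow> 'a \<Rightarrow> 'a set \<Rightarrow> 'a \<Rightarrow> nat \<Rightarrow> bool"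
  for mult one S where
  empty_word: "is_word mult one S one 0"
| gen_word: "s \<in> S \<Longrightarrow> is_word mult one S s 1"
| prod_word: "is_word mult one S u i \<Longrightarrow> is_word mult one S v j \<Longrightarrow> 1 \<le> i \<Longrightarrow> 1 \<le> j
              \<Longrightarrow> is_word mult one S (mult u v) (i + j)"

definition word_span ::
  "('f::field \<Rightarrow> 'a::ab_group_add \<Rightarrow> 'a) \<Rightarrow> ('a \<Rightarrow> 'a \<Rightarrow> 'a) \<Rightarrow> 'a \<Rightarrow> 'a set \<Rightarrow> nat \<Rightarrow> 'a set" where
  "word_span scale mult one S i = module.span scale {w. \<exists>k\<le>i. is_word mult one S w k}"

definition generates ::
  "('f::field \<Rightarrow> 'a::ab_group_add \<Rightarrow> 'a) \<Rightarrow> ('a \<Rightarrow> 'a \<Rightarrow> 'a) \<Rightarrow> 'a \<Rightarrow> 'a set \<Rightarrow> bool" where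
  "generates scale mult one S \<longleftrightarrow> module.span scale {w. \<exists>k. is_word mult one S w k} = UNIV"

text \<open>Characteristic sequence: the value k occurs exactly
  s_k = dim L_k - dim L_(k-1) times (with dim L_(-1) = 0), in non-decreasing order;
  equivalently the j-th term (j = 0..n-1) is the least k with dim L_k > j.\<close>

definition char_seq ::
  "('f::field \<Rightarrow> 'a::ab_group_add \<Rightarrow> 'a) \<Rightarrow> ('a \<Rightarrow> 'a \<Rightarrow> 'a) \<Rightarrow> 'a \<Rightarrow> 'a set \<Rightarrow> nat \<Rightarrow> nat" where
  "char_seq scale mult one S j = (LEAST k. j < vector_space.dim scale (word_span scale mult one S k))"

end

theory Submission
  imports Defs
begin

text \<open>A word of length i times a word of length j is a word of length i + j, so
  L_k L_l \<subseteq> L_(k+l). If L_2k = L_k for some k \<ge> 1, then L_k is a subalgebra containing S,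
  hence the whole algebra; so dim L_2k > dim L_k whenever L_k is proper. Taking k = m_h,
  we have dim L_k > h, hence dim L_2k > h + 1, i.e. m_(h+1) \<le> 2k.\<close>

lemma is_word_0_imp_one: "is_word mult one S w 0 \<Longrightarrow> w = one"
  by (induction w "0::nat" rule: is_word.induct) auto

locale unital_alg =
  fixes scale :: "'f::field \<Rightarrow> 'a::ab_group_add \<Rightarrow> 'a"
    and mult :: "'a \<Rightarrow> 'a \<Rightarrow> 'a" and one :: 'a
  assumes unital_algebra: "unital_algebra scale mult one"
begin

sublocale vector_space scale
  using unital_algebra unfolding unital_algebra_def by blast

lemma mult_add_left: "mult (x + y) z = mult x z + mult y z"
  and mult_add_right: "mult x (y + z) = mult x y + mult x z"
  and mult_scale_left: "mult (scale c x) y = scale c (mult x y)"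
  and mult_scale_right: "mult x (scale c y) = scale c (mult x y)"
  and mult_one_left: "mult one x = x"
  and mult_one_right: "mult x one = x"
  using unital_algebra unfolding unital_algebra_def by blast+

lemma mult_zero_left: "mult 0 x = 0"
  using mult_add_left[of 0 0 x] by simp

lemma mult_zero_right: "mult x 0 = 0"
  using mult_add_right[of x 0 0] by simp

lemma mult_span_in_subspace:
  assumes V: "subspace V" and x: "x \<in> span A" and y: "y \<in> span B"
    and AB: "\<And>a b. a \<in> A \<Longrightarrow> b \<in> B \<Longrightarrow> mult a b \<in> V"
  shows "mult x y \<in> V"
proof -
  have xB: "mult x b \<in> V" if "b \<in> B" for b
    using x
  proof (induction rule: span_induct_alt)
    case base
    show ?case by (simp add: mult_zero_left subspace_0[OF V])
  next
    case (step c a z)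
    then show ?case
      using AB[OF step(1) that] V by (simp add: mult_add_left mult_scale_left subspace_add subspace_scale)
  qed
  show ?thesis
    using y
  proof (induction rule: span_induct_alt)
    case base
    show ?case by (simp add: mult_zero_right subspace_0[OF V])
  next
    case (step c b z)
    then show ?case
      using xB[OF step(1)] V by (simp add: mult_add_right mult_scale_right subspace_add subspace_scale)
  qed
qed

lemma is_word_mult:
  assumes "is_word mult one S u i" "is_word mult one S v j"
  shows "is_word mult one S (mult u v) (i + j)"
proof (cases "i = 0 \<or> j = 0")
  case True
  then show ?thesis
    using assms is_word_0_imp_one by (fastforce simp: mult_one_left mult_one_right)
next
  case False
  then show ?thesis
    using assms by (intro is_word.prod_word) auto
qed

lemma subspace_word_span: "subspace (word_span scale mult one S k)"
  unfolding word_span_def by simp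

lemma span_word_span: "span (word_span scale mult one S k) = word_span scale mult one S k"
  by (simp add: subspace_word_span)

lemma word_span_mono: "k \<le> l \<Longrightarrow> word_span scale mult one S k \<subseteq> word_span scale mult one S l"
  unfolding word_span_def by (rule span_mono) (auto intro: order_trans)

lemma word_in_word_span: "is_word mult one S w j \<Longrightarrow> j \<le> k \<Longrightarrow> w \<in> word_span scale mult one S k"
  unfolding word_span_def by (rule span_base) auto

lemma word_span_0: "word_span scale mult one S 0 = span {one}"
proof -
  have "{w. \<exists>j\<le>0. is_word mult one S w j} = {one}"
    using is_word_0_imp_one is_word.empty_word by auto
  then show ?thesis
    unfolding word_span_def by simp
qed

lemma mult_word_span:
  assumes "u \<in> word_span scale mult one S k" "v \<in> word_span scale mult one S l"
  shows "mult u v \<in> word_span scale mult one S (k + l)"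
  using subspace_word_span assms[unfolded word_span_def]
proof (rule mult_span_in_subspace)
  fix a b
  assume "a \<in> {w. \<exists>i\<le>k. is_word mult one S w i}" "b \<in> {w. \<exists>j\<le>l. is_word mult one S w j}"
  then obtain i j where "is_word mult one S a i" "i \<le> k" "is_word mult one S b j" "j \<le> l"
    by blast
  then show "mult a b \<in> word_span scale mult one S (k + l)"
    by (intro word_in_word_span[OF is_word_mult]) auto
qed

lemma word_span_eq_UNIV_if_double_subset:
  assumes gen: "generates scale mult one S" and "1 \<le> k"
    and double: "word_span scale mult one S (2 * k) \<subseteq> word_span scale mult one S k"
  shows "word_span scale mult one S k = UNIV"
proof -
  have "w \<in> word_span scale mult one S k" if "is_word mult one S w j" for w j
    using that
  proof (induction rule: is_word.induct)
    case empty_word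
    show ?case by (rule word_in_word_span[OF is_word.empty_word]) simp
  next
    case (gen_word s)
    then show ?case using \<open>1 \<le> k\<close> by (intro word_in_word_span[OF is_word.gen_word])
  next
    case (prod_word u i v j)
    then show ?case
      using mult_word_span[of u S k v k] double by (auto simp: mult_2)
  qed
  then have "span {w. \<exists>j. is_word mult one S w j} \<subseteq> word_span scale mult one S k"
    by (intro span_minimal subspace_word_span) auto
  then show ?thesis
    using gen unfolding generates_def by auto
qed

end

locale fin_dim_generated_alg =
  unital_alg scale mult one + finite_dimensional_vector_space scale Basis
  for scale :: "'f::field \<Rightarrow> 'a::ab_group_add \<Rightarrow> 'a" and mult one Basis +
  fixes S :: "'a set"
  assumes generates: "generates scale mult one S"
begin

abbreviation L :: "nat \<Rightarrow> 'a set" where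
  "L k \<equiv> word_span scale mult one S k"

lemma dim_word_span_double_gt:
  assumes "1 \<le> k" "L k \<noteq> UNIV"
  shows "dim (L k) < dim (L (2 * k))"
proof -
  have "L k \<noteq> L (2 * k)"
    using word_span_eq_UNIV_if_double_subset[OF generates] assms by blast
  then have "L k \<subset> L (2 * k)"
    using word_span_mono[of k "2 * k" S] by auto
  then have "span (L k) \<subset> span (L (2 * k))"
    by (simp only: span_word_span)
  then show ?thesis
    by (rule dim_psubset)
qed

lemma ex_word_span_eq_UNIV: "\<exists>k. L k = UNIV"
proof (rule ccontr)
  assume proper: "\<nexists>k. L k = UNIV"
  have growth: "j \<le> dim (L (2 ^ j))" for j
  proof (induction j)
    case (Suc j)
    then show ?case
      using dim_word_span_double_gt[of "2 ^ j"] proper by simp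
  qed simp
  show False
    using growth[of "Suc dimension"] dim_subset_UNIV[of "L (2 ^ Suc dimension)"] by linarith
qed

lemma dim_word_span_0: "dim (L 0) \<le> 1"
  using dim_le_card[of "L 0" "{one}"] by (simp add: word_span_0)

lemma char_seq_le: "j < dim (L k) \<Longrightarrow> char_seq scale mult one S j \<le> k"
  unfolding char_seq_def by (rule Least_le)

lemma less_dim_word_span_char_seq:
  assumes "j < dimension"
  shows "j < dim (L (char_seq scale mult one S j))"
proof -
  obtain k where "L k = UNIV"
    using ex_word_span_eq_UNIV by blast
  then have "j < dim (L k)"
    using assms by (simp add: dimension_def)
  then show ?thesis
    unfolding char_seq_def by (rule LeastI)
qed

lemma char_seq_pos:
  assumes "1 \<le> j" "j < dimension"
  shows "1 \<le> char_seq scale mult one S j"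
  using less_dim_word_span_char_seq[OF assms(2)] dim_word_span_0 assms(1)
  by (cases "char_seq scale mult one S j") auto

lemma char_seq_Suc_le_double:
  assumes "1 \<le> j" "Suc j < dimension"
  shows "char_seq scale mult one S (Suc j) \<le> 2 * char_seq scale mult one S j"
proof -
  define k where "k = char_seq scale mult one S j"
  have "1 \<le> k"
    unfolding k_def using assms by (intro char_seq_pos) simp_all
  have "Suc j < dim (L (2 * k))"
  proof (cases "L k = UNIV")
    case True
    then have "L (2 * k) = UNIV"
      using word_span_mono[of k "2 * k"] by auto
    then show ?thesis
      using assms(2) by (simp add: dimension_def)
  next
    case False
    have "Suc j \<le> dim (L k)"
      unfolding k_def using assms by (simp add: Suc_le_eq less_dim_word_span_char_seq)
    also have "dim (L k) < dim (L (2 * k))"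
      using \<open>1 \<le> k\<close> False by (rule dim_word_span_double_gt)
    finally show ?thesis by simp
  qed
  then show ?thesis
    unfolding k_def by (rule char_seq_le)
qed

end

text \<open>The library's dim is the cardinality of a basis, hence 0 for an infinite-dimensional space.\<close>

lemma finite_dimensional_if_dim_pos:
  fixes scale :: "'f::field \<Rightarrow> 'a::ab_group_add \<Rightarrow> 'a"
  assumes "vector_space scale" "0 < vector_space.dim scale (UNIV :: 'a set)"
  obtains Basis where "finite_dimensional_vector_space scale (Basis :: 'a set)"
proof -
  interpret vector_space scale by (fact assms(1))
  obtain B where "independent B" "UNIV \<subseteq> span B" "card B = dim UNIV"
    using basis_exists[of UNIV] by blast
  with assms(2) have "finite_dimensional_vector_space scale B"
    by unfold_locales (auto intro: card_ge_0_finite)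
  then show ?thesis by (rule that)
qed

theorem lemma3p9:
  fixes scale :: "'f::field \<Rightarrow> 'a::ab_group_add \<Rightarrow> 'a"
    and mult :: "'a \<Rightarrow> 'a \<Rightarrow> 'a" and one :: 'a and S :: "'a set" and n :: nat
  assumes "unital_algebra scale mult one"
    and "vector_space.dim scale (UNIV :: 'a set) = n"
    and "n > 4"
    and "finite S"
    and "generates scale mult one S"
  shows "\<forall>h. 2 \<le> h \<and> h \<le> n - 2 \<longrightarrow>
           char_seq scale mult one S (h + 1) \<le> 2 * char_seq scale mult one S h"
proof -
  interpret unital_alg scale mult one
    by (rule unital_alg.intro) (fact assms(1))
  obtain Basis where fin_dim: "finite_dimensional_vector_space scale (Basis :: 'a set)"
    using finite_dimensional_if_dim_pos[OF vector_space_axioms] assms(2,3) by auto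
  interpret fin_dim_generated_alg scale mult one Basis S
    by (rule fin_dim_generated_alg.intro[OF unital_alg_axioms fin_dim fin_dim_generated_alg_axioms.intro])
      (fact assms(5))
  show ?thesis
    using char_seq_Suc_le_double assms(2,3) by (auto simp: dimension_def)
qed

end
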